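(* Let $W$ be a finite set, $\mathtt{N}=\{N_1,\ldots,N_r\}$ a sequence of subsets of $W$, and $w\in W$. Then $$\mathrm{lk}_{K(\mathtt{N})}(w)=K(\mathtt{N}_w),\qquad\mathrm{dl}_{K(\mathtt{N})}(w)=K(\widehat{\mathtt{N}}_w)*\Delta^{A_w}.$$
   Context: For a sequence $\mathtt{N}=\{N_1,\ldots,N_r\}$ of subsets of a finite ground set $W$ (repetitions allowed), choose distinct points $a_1,\ldots,a_r\notin W$, set $\widetilde{N}_i=N_i\sqcup\{a_i\}$; $K(\mathtt{N})$ is the simplicial complex on $W\sqcup\{a_1,\ldots,a_r\}$ whose minimal non-faces are exactly $\widetilde{N}_1,\ldots,\widetilde{N}_r$. Define $\mathtt{N}_w=\{N_i-\{w\}\mid i=1,\ldots,r\}$ and $\widehat{\mathtt{N}}_w=\{N_i\mid w\notin N_i\}$, both with ground set $W-\{w\}$, and $A_w=\{a_i\mid w\in N_i\}$; in forming $K(\mathtt{N}_w)$ and $K(\widehat{\mathtt{N}}_w)$ the new point attached to (the set coming from) $N_i$ is the same $a_i$. $\mathrm{lk}_K(w)=\{\tau\in K\mid w\notin\tau,\ \tau\cup\{w\}\in K\}$ and $\mathrm{dl}_K(w)=\{\tau\in K\mid w\notin\tau\}$; $\Delta^S$ is the full simplex on $S$ and $*$ is the join. *)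

theory Defs
  imports Main
begin

text \<open>Vertices of K(N): Inl x for x in the ground set W, Inr i for the new point a_i.
  A (possibly repeating) sequence of subsets is a function N indexed by a finite
  index set I; the sequence N_1..N_r is the case I = {..<r}.\<close>

definition tildeN :: "(nat \<Rightarrow> 'a set) \<Rightarrow> nat \<Rightarrow> ('a + nat) set" where
  "tildeN N i = Inl ` N i \<union> {Inr i}"

text \<open>K(N): faces are the subsets of W \<union> {a_i | i \<in> I} containing no tildeN i,
  i.e. the complex whose minimal non-faces are exactly the tildeN i.\<close>
definition Kcx :: "'a set \<Rightarrow> nat set \<Rightarrow> (nat \<Rightarrow> 'a set) \<Rightarrow> ('a + nat) set set" where
  "Kcx W I N = {\<sigma>. \<sigma> \<subseteq> Inl ` W \<union> Inr ` I \<and> (\<forall>i\<in>I. \<not> tildeN N i \<subseteq> \<sigma>)}"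

definition lk :: "'v set set \<Rightarrow> 'v \<Rightarrow> 'v set set" where
  "lk K v = {\<tau> \<in> K. v \<notin> \<tau> \<and> insert v \<tau> \<in> K}"

definition dl :: "'v set set \<Rightarrow> 'v \<Rightarrow> 'v set set" where
  "dl K v = {\<tau> \<in> K. v \<notin> \<tau>}"

definition join :: "'v set set \<Rightarrow> 'v set set \<Rightarrow> 'v set set" where
  "join K L = {\<sigma> \<union> \<tau> | \<sigma> \<tau>. \<sigma> \<in> K \<and> \<tau> \<in> L}"

definition full_simplex :: "'v set \<Rightarrow> 'v set set" where
  "full_simplex S = Pow S"

end

theory Submission
  imports Defs
begin

lemma tildeN_subset_iff: "tildeN N i \<subseteq> S \<longleftrightarrow> Inl ` N i \<subseteq> S \<and> Inr i \<in> S"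
  unfolding tildeN_def by blast

lemma lk_Kcx:
  assumes "w \<in> W"
  shows "lk (Kcx W I N) (Inl w) = Kcx (W - {w}) I (\<lambda>i. N i - {w})"
  using assms unfolding lk_def Kcx_def tildeN_subset_iff by (auto simp: image_subset_iff)

text \<open>A face missing w contains no tildeN i with w \<in> N i, so its vertices in A_w are
  unconstrained; what remains is a face of K(hat N_w).\<close>

lemma dl_Kcx:
  "dl (Kcx W I N) (Inl w) =
     join (Kcx (W - {w}) {i \<in> I. w \<notin> N i} N) (full_simplex (Inr ` {i \<in> I. w \<in> N i}))"
  (is "?dl = join ?K (full_simplex ?A)")
proof
  show "?dl \<subseteq> join ?K (full_simplex ?A)"
  proof
    fix \<tau> assume "\<tau> \<in> ?dl"
    then have \<tau>: "\<tau> \<subseteq> Inl ` W \<union> Inr ` I" "Inl w \<notin> \<tau>" "\<forall>i\<in>I. \<not> tildeN N i \<subseteq> \<tau>"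
      unfolding dl_def Kcx_def by auto
    have "\<tau> - ?A \<subseteq> Inl ` (W - {w}) \<union> Inr ` {i \<in> I. w \<notin> N i}"
    proof
      fix x assume "x \<in> \<tau> - ?A"
      with \<tau>(1,2) show "x \<in> Inl ` (W - {w}) \<union> Inr ` {i \<in> I. w \<notin> N i}"
        by (cases x) auto
    qed
    moreover have "\<forall>i \<in> {i \<in> I. w \<notin> N i}. \<not> tildeN N i \<subseteq> \<tau> - ?A"
      using \<tau>(3) by (auto simp: tildeN_subset_iff)
    ultimately have "\<tau> - ?A \<in> ?K"
      unfolding Kcx_def by simp
    moreover have "\<tau> \<inter> ?A \<in> full_simplex ?A"
      unfolding full_simplex_def by simp
    moreover have "\<tau> = (\<tau> - ?A) \<union> (\<tau> \<inter> ?A)"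
      by (rule Un_Diff_Int[symmetric])
    ultimately show "\<tau> \<in> join ?K (full_simplex ?A)"
      unfolding join_def by blast
  qed
  show "join ?K (full_simplex ?A) \<subseteq> ?dl"
    unfolding join_def full_simplex_def dl_def Kcx_def tildeN_subset_iff
    by (auto simp: image_subset_iff)
qed

theorem lemma4p1:
  fixes W :: "'a set" and N :: "nat \<Rightarrow> 'a set" and r :: nat and w :: 'a
  assumes "finite W"
    and "\<And>i. i < r \<Longrightarrow> N i \<subseteq> W"
    and "w \<in> W"
  shows "lk (Kcx W {..<r} N) (Inl w) = Kcx (W - {w}) {..<r} (\<lambda>i. N i - {w})
     \<and> dl (Kcx W {..<r} N) (Inl w) =
           join (Kcx (W - {w}) {i. i < r \<and> w \<notin> N i} N)
                (full_simplex (Inr ` {i. i < r \<and> w \<in> N i}))"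
  using lk_Kcx[OF assms(3)] dl_Kcx[of W "{..<r}" N w] by simp

end
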